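(* Let $(W,S)$ be the Weyl group and set of simple reflections of a complex semisimple algebraic group. Suppose $\mathbf s=(s_1,\ldots,s_q)$ is a tuple of elements of $S$ with $H_{s_1}\cdots H_{s_q}=H_w$, where $w\in W$ is fully commutative, and suppose $q>l(w)$. Then there exist $i<j$ such that $s_i=s_j$ and $s_i$ commutes with $s_k$ for every $k$ with $i<k<j$.
   Context: The $0$-Hecke algebra has basis $H_u$ ($u\in W$), $H_1$ the identity, and $H_sH_u=H_{su}$ if $l(su)>l(u)$, $H_sH_u=H_u$ if $l(su)<l(u)$ ($s\in S$). An element $w\in W$ is fully commutative if any reduced expression for $w$ can be obtained from any other by using only the relations $st=ts$ for commuting $s,t\in S$. *)

theory Defs
  imports "HOL-Analysis.Analysis"
begin

definition reflection :: "'a::euclidean_space \<Rightarrow> 'a \<Rightarrow> 'a" where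
  "reflection \<alpha> v = v - (2 * (v \<bullet> \<alpha>) / (\<alpha> \<bullet> \<alpha>)) *\<^sub>R \<alpha>"

definition root_system :: "'a::euclidean_space set \<Rightarrow> bool" where
  "root_system \<Phi> \<longleftrightarrow> finite \<Phi> \<and> 0 \<notin> \<Phi> \<and>
     (\<forall>\<alpha>\<in>\<Phi>. reflection \<alpha> ` \<Phi> = \<Phi>) \<and>
     (\<forall>\<alpha>\<in>\<Phi>. \<forall>\<beta>\<in>\<Phi>. 2 * (\<beta> \<bullet> \<alpha>) / (\<alpha> \<bullet> \<alpha>) \<in> \<int>) \<and>
     (\<forall>\<alpha>\<in>\<Phi>. \<forall>c::real. c *\<^sub>R \<alpha> \<in> \<Phi> \<longrightarrow> c = 1 \<or> c = -1)"

definition is_base :: "'a::euclidean_space set \<Rightarrow> 'a set \<Rightarrow> bool" where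
  "is_base \<Phi> \<Delta> \<longleftrightarrow> \<Delta> \<subseteq> \<Phi> \<and> independent \<Delta> \<and>
     (\<forall>\<beta>\<in>\<Phi>. \<exists>c::'a \<Rightarrow> int.
        ((\<forall>\<alpha>\<in>\<Delta>. c \<alpha> \<ge> 0) \<or> (\<forall>\<alpha>\<in>\<Delta>. c \<alpha> \<le> 0)) \<and>
        \<beta> = (\<Sum>\<alpha>\<in>\<Delta>. of_int (c \<alpha>) *\<^sub>R \<alpha>))"

definition word_prod :: "('a \<Rightarrow> 'a) list \<Rightarrow> 'a \<Rightarrow> 'a" where
  "word_prod ws = foldr (\<circ>) ws id"

definition weyl_group :: "'a::euclidean_space set \<Rightarrow> ('a \<Rightarrow> 'a) set" where
  "weyl_group \<Phi> = {word_prod ws | ws. set ws \<subseteq> reflection ` \<Phi>}"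

definition simple_reflections :: "'a::euclidean_space set \<Rightarrow> ('a \<Rightarrow> 'a) set" where
  "simple_reflections \<Delta> = reflection ` \<Delta>"

definition wlen :: "('a \<Rightarrow> 'a) set \<Rightarrow> ('a \<Rightarrow> 'a) \<Rightarrow> nat" where
  "wlen S w = (LEAST n. \<exists>ws. set ws \<subseteq> S \<and> length ws = n \<and> word_prod ws = w)"

text \<open>Product H_{s_1} ... H_{s_q} in the 0-Hecke algebra, which is H_u for the
  element u computed here (H_s H_u = H_{su} if l(su) > l(u), else H_u).\<close>
fun hecke_prod :: "('a \<Rightarrow> 'a) set \<Rightarrow> ('a \<Rightarrow> 'a) list \<Rightarrow> ('a \<Rightarrow> 'a)" where
  "hecke_prod S [] = id"
| "hecke_prod S (s # xs) =
     (if wlen S (s \<circ> hecke_prod S xs) > wlen S (hecke_prod S xs)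
      then s \<circ> hecke_prod S xs else hecke_prod S xs)"

definition reduced_word :: "('a \<Rightarrow> 'a) set \<Rightarrow> ('a \<Rightarrow> 'a) \<Rightarrow> ('a \<Rightarrow> 'a) list \<Rightarrow> bool" where
  "reduced_word S w ws \<longleftrightarrow> set ws \<subseteq> S \<and> word_prod ws = w \<and> length ws = wlen S w"

definition comm_move :: "('a \<Rightarrow> 'a) list rel" where
  "comm_move = {(xs @ [s, t] @ ys, xs @ [t, s] @ ys) | xs ys s t. s \<circ> t = t \<circ> s}"

definition fully_commutative :: "('a \<Rightarrow> 'a) set \<Rightarrow> ('a \<Rightarrow> 'a) \<Rightarrow> bool" where
  "fully_commutative S w \<longleftrightarrow>
     (\<forall>a b. reduced_word S w a \<longrightarrow> reduced_word S w b \<longrightarrow> (a, b) \<in> comm_move\<^sup>*)"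

end

theory Submission
  imports Defs
begin

text \<open>
  If the word \<open>s\<^sub>1 \<dots> s\<^sub>q\<close> is not reduced for its Hecke product \<open>w\<close>, read it from the right:
  it has a reduced suffix \<open>b\<close> (with \<open>H\<^sub>b = H\<^sub>u\<close>, \<open>u\<close> the product of \<open>b\<close>) preceded by a letter \<open>c\<close>
  that is absorbed, i.e. \<open>l(cu) \<le> l(u)\<close>. By parity \<open>l(cu) < l(u)\<close>, so \<open>u\<close> also has a reduced
  word \<open>c y\<close>. The letters in front of \<open>c\<close> contribute a word \<open>x\<close> with \<open>w = x u\<close> and
  \<open>l(w) = |x| + l(u)\<close>, so \<open>x c y\<close> and \<open>x b\<close> are both reduced words of \<open>w\<close>. Full commutativity
  turns one into the other by commutations, which never swap two non-commuting letters;
  hence the first \<open>c\<close> in \<open>b\<close> is preceded in \<open>b\<close> only by letters commuting with \<open>c\<close>.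
  The parity of \<open>l\<close> comes from counting positive roots sent to negative ones.
\<close>

lemma word_prod_Nil [simp]: "word_prod [] = id"
  by (simp add: word_prod_def)

lemma word_prod_Cons [simp]: "word_prod (s # ws) = s \<circ> word_prod ws"
  by (simp add: word_prod_def)

lemma word_prod_append: "word_prod (xs @ ys) = word_prod xs \<circ> word_prod ys"
  by (induction xs) (simp_all add: comp_assoc)

lemma wlen_le_length: "set ws \<subseteq> S \<Longrightarrow> wlen S (word_prod ws) \<le> length ws"
  unfolding wlen_def by (rule Least_le) blast

lemma reduced_word_exists:
  assumes "set ws \<subseteq> S"
  obtains rs where "reduced_word S (word_prod ws) rs"
  using LeastI[of "\<lambda>n. \<exists>rs. set rs \<subseteq> S \<and> length rs = n \<and> word_prod rs = word_prod ws" "length ws"]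
    assms that unfolding reduced_word_def wlen_def by blast

lemma wlen_comp_le:
  assumes "set ws \<subseteq> S" "s \<in> S"
  shows "wlen S (s \<circ> word_prod ws) \<le> Suc (wlen S (word_prod ws))"
proof -
  obtain rs where rs: "reduced_word S (word_prod ws) rs"
    using reduced_word_exists[OF assms(1)] .
  then have "wlen S (word_prod (s # rs)) \<le> length (s # rs)"
    using assms(2) by (intro wlen_le_length) (auto simp: reduced_word_def)
  with rs show ?thesis by (simp add: reduced_word_def)
qed

lemma reduced_word_append:
  assumes "reduced_word S u rs" "set xs \<subseteq> S"
    and "wlen S (word_prod xs \<circ> u) = length xs + wlen S u"
  shows "reduced_word S (word_prod xs \<circ> u) (xs @ rs)"
  using assms by (simp add: reduced_word_def word_prod_append)

subsection \<open>Products in the 0-Hecke algebra\<close>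

lemma hecke_prod_word_prod:
  "set xs \<subseteq> S \<Longrightarrow> \<exists>ws. set ws \<subseteq> S \<and> hecke_prod S xs = word_prod ws"
proof (induction xs)
  case Nil
  then show ?case by (intro exI[of _ "[]"]) simp
next
  case (Cons s xs)
  then obtain ws where ws: "set ws \<subseteq> S" "hecke_prod S xs = word_prod ws" by auto
  show ?case
  proof (cases "wlen S (s \<circ> hecke_prod S xs) > wlen S (hecke_prod S xs)")
    case True
    then have "hecke_prod S (s # xs) = word_prod (s # ws)" using ws by simp
    with ws Cons.prems show ?thesis by (intro exI[of _ "s # ws"]) simp
  next
    case False
    then have "hecke_prod S (s # xs) = word_prod ws" using ws by simp
    with ws show ?thesis by blast
  qed
qed

lemma hecke_prod_append:
  assumes "set p \<subseteq> S" "set b \<subseteq> S"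
  shows "\<exists>xs. set xs \<subseteq> S \<and> hecke_prod S (p @ b) = word_prod xs \<circ> hecke_prod S b \<and>
           wlen S (hecke_prod S (p @ b)) = length xs + wlen S (hecke_prod S b)"
  using assms(1)
proof (induction p)
  case Nil
  show ?case by (intro exI[of _ "[]"]) (simp add: fun_eq_iff)
next
  case (Cons s p)
  have "s \<in> S" "set p \<subseteq> S" using Cons.prems by simp_all
  from Cons.IH[OF \<open>set p \<subseteq> S\<close>] obtain xs where xs: "set xs \<subseteq> S"
    "hecke_prod S (p @ b) = word_prod xs \<circ> hecke_prod S b"
    "wlen S (hecke_prod S (p @ b)) = length xs + wlen S (hecke_prod S b)" by blast
  show ?case
  proof (cases "wlen S (s \<circ> hecke_prod S (p @ b)) > wlen S (hecke_prod S (p @ b))")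
    case True
    obtain ws where ws: "set ws \<subseteq> S" "hecke_prod S (p @ b) = word_prod ws"
      using hecke_prod_word_prod[of "p @ b" S] \<open>set p \<subseteq> S\<close> assms(2) by auto
    have "wlen S (s \<circ> hecke_prod S (p @ b)) = Suc (wlen S (hecke_prod S (p @ b)))"
      using wlen_comp_le[OF ws(1) \<open>s \<in> S\<close>] True unfolding ws(2) by linarith
    moreover have "hecke_prod S ((s # p) @ b) = word_prod (s # xs) \<circ> hecke_prod S b"
      using True xs(2) by (simp add: comp_assoc del: comp_apply)
    ultimately show ?thesis
      using True xs \<open>s \<in> S\<close> by (intro exI[of _ "s # xs"]) (simp del: comp_apply)
  next
    case False
    then have eq: "hecke_prod S ((s # p) @ b) = hecke_prod S (p @ b)" by simp
    show ?thesis
      unfolding eq using xs by blast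
  qed
qed

lemma hecke_prod_reduced_or_absorbs:
  assumes "set xs \<subseteq> S"
  shows "reduced_word S (hecke_prod S xs) xs \<or>
    (\<exists>p c b. xs = p @ c # b \<and> reduced_word S (hecke_prod S b) b \<and>
       wlen S (c \<circ> hecke_prod S b) \<le> wlen S (hecke_prod S b))"
  using assms
proof (induction xs)
  case Nil
  have "wlen S (word_prod []) = 0"
    using wlen_le_length[of "[]" S] by simp
  then show ?case by (simp add: reduced_word_def id_def)
next
  case (Cons s xs)
  show ?case
  proof (cases "reduced_word S (hecke_prod S xs) xs")
    case red: True
    show ?thesis
    proof (cases "wlen S (s \<circ> hecke_prod S xs) > wlen S (hecke_prod S xs)")
      case True
      have "wlen S (s \<circ> word_prod xs) \<le> Suc (wlen S (word_prod xs))"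
        using Cons.prems by (intro wlen_comp_le) auto
      with True red Cons.prems have "reduced_word S (hecke_prod S (s # xs)) (s # xs)"
        by (simp add: reduced_word_def)
      then show ?thesis ..
    next
      case False
      then have "wlen S (s \<circ> hecke_prod S xs) \<le> wlen S (hecke_prod S xs)" by simp
      moreover have "s # xs = [] @ s # xs" by simp
      ultimately show ?thesis using red by blast
    qed
  next
    case False
    moreover have "set xs \<subseteq> S" using Cons.prems by simp
    ultimately obtain p c b where "xs = p @ c # b" "reduced_word S (hecke_prod S b) b"
      "wlen S (c \<circ> hecke_prod S b) \<le> wlen S (hecke_prod S b)" using Cons.IH by blast
    moreover have "s # xs = (s # p) @ c # b" using \<open>xs = p @ c # b\<close> by simp
    ultimately show ?thesis by blast
  qed
qed

subsection \<open>Commutation classes\<close>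

lemma comm_move_rtrancl_mset: "(u, v) \<in> comm_move\<^sup>* \<Longrightarrow> mset u = mset v"
proof (induction rule: rtrancl_induct)
  case (step y z)
  then show ?case
    unfolding comm_move_def by (auto simp: add_mset_commute)
qed simp

lemma comm_move_rtrancl_filter:
  assumes "(u, v) \<in> comm_move\<^sup>*" "c \<circ> d \<noteq> d \<circ> c"
  shows "filter (\<lambda>z. z = c \<or> z = d) u = filter (\<lambda>z. z = c \<or> z = d) v"
  using assms(1)
proof (induction rule: rtrancl_induct)
  case (step y z)
  from step(2) obtain xs ys s t where "y = xs @ [s, t] @ ys" "z = xs @ [t, s] @ ys"
    and "s \<circ> t = t \<circ> s"
    unfolding comm_move_def by blast
  moreover have "filter (\<lambda>z. z = c \<or> z = d) [s, t] = filter (\<lambda>z. z = c \<or> z = d) [t, s]"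
    using \<open>s \<circ> t = t \<circ> s\<close> assms(2) by auto
  ultimately have "filter (\<lambda>z. z = c \<or> z = d) y = filter (\<lambda>z. z = c \<or> z = d) z"
    by (simp only: filter_append)
  with step(3) show ?case by simp
qed simp

text \<open>The relative order of two non-commuting letters is an invariant of the commutation
  class, so no letter before the first \<open>c\<close> of \<open>b\<close> can fail to commute with \<open>c\<close>.\<close>
lemma comm_move_rtrancl_first_occurrence:
  assumes "(xs @ c # ys, xs @ b) \<in> comm_move\<^sup>*"
  obtains j where "j < length b" "b ! j = c" "\<forall>k<j. c \<circ> b ! k = b ! k \<circ> c"
proof -
  have "mset (c # ys) = mset b"
    using comm_move_rtrancl_mset[OF assms] by simp
  then have "c \<in> set b"
    by (metis list.set_intros(1) set_mset_mset)
  then obtain b1 b2 where b: "b = b1 @ c # b2" and "c \<notin> set b1"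
    using split_list_first by metis
  have "c \<circ> b1 ! k = b1 ! k \<circ> c" if k: "k < length b1" for k
  proof (rule ccontr)
    define d where "d = b1 ! k"
    define P where "P = (\<lambda>z. z = c \<or> z = d)"
    assume "c \<circ> b1 ! k \<noteq> b1 ! k \<circ> c"
    then have "filter P (xs @ c # ys) = filter P (xs @ b)"
      unfolding P_def d_def by (rule comm_move_rtrancl_filter[OF assms])
    moreover have "d \<in> set (filter P b1)"
      using k unfolding P_def d_def by simp
    then obtain e r where er: "filter P b1 = e # r"
      by (cases "filter P b1") auto
    then have "e \<in> set (filter P b1)" by simp
    with \<open>c \<notin> set b1\<close> have "e = d" unfolding P_def by auto
    with er have "filter P b1 = d # r" by simp
    ultimately have "c = d"
      using b by (simp add: P_def)
    with k \<open>c \<notin> set b1\<close> show False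
      unfolding d_def by simp
  qed
  with b show ?thesis
    by (intro that[of "length b1"]) (auto simp: nth_append)
qed

lemma linear_reflection: "linear (reflection a)"
proof (rule linearI)
  fix x y
  show "reflection a (x + y) = reflection a x + reflection a y"
    by (simp add: reflection_def inner_add_left add_divide_distrib algebra_simps)
next
  fix c :: real and x
  show "reflection a (c *\<^sub>R x) = c *\<^sub>R reflection a x"
    by (simp add: reflection_def scaleR_diff_right mult.left_commute)
qed

lemma reflection_self: "a \<noteq> 0 \<Longrightarrow> reflection a a = - a"
  by (simp add: reflection_def scaleR_2)

lemma reflection_reflection: "a \<noteq> 0 \<Longrightarrow> reflection a (reflection a v) = v"
  by (simp add: reflection_def inner_diff_left)

lemma reflection_uminus: "reflection a (- v) = - reflection a v"
  using linear_reflection linear_neg by blast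

lemma independent_coeff_unique:
  fixes B :: "'a::euclidean_space set"
  assumes "independent B" "(\<Sum>u\<in>B. c u *\<^sub>R u) = (\<Sum>u\<in>B. d u *\<^sub>R u)" "v \<in> B"
  shows "c v = d v"
proof -
  have "(\<Sum>u\<in>B. (c u - d u) *\<^sub>R u) = 0"
    using assms(2) by (simp add: scaleR_diff_left sum_subtractf)
  then show ?thesis
    using assms(1,3) unfolding independent_explicit by (metis eq_iff_diff_eq_0)
qed

subsection \<open>Positive roots and inversions\<close>

context
  fixes \<Phi> \<Delta> :: "'a::euclidean_space set"
  assumes root_system: "root_system \<Phi>" and base: "is_base \<Phi> \<Delta>"
begin

lemma finite_roots: "finite \<Phi>"
  using root_system unfolding root_system_def by blast

lemma base_subset_roots: "\<Delta> \<subseteq> \<Phi>"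
  using base unfolding is_base_def by blast

lemma independent_base: "independent \<Delta>"
  using base unfolding is_base_def by blast

lemma finite_base: "finite \<Delta>"
  using independent_bound[OF independent_base] by blast

lemma root_nonzero: "\<beta> \<in> \<Phi> \<Longrightarrow> \<beta> \<noteq> 0"
  using root_system unfolding root_system_def by metis

lemma reflection_image_roots: "\<alpha> \<in> \<Phi> \<Longrightarrow> reflection \<alpha> ` \<Phi> = \<Phi>"
  using root_system unfolding root_system_def by blast

lemma uminus_root:
  assumes "\<beta> \<in> \<Phi>"
  shows "- \<beta> \<in> \<Phi>"
proof -
  have "reflection \<beta> \<beta> \<in> \<Phi>"
    using reflection_image_roots[OF assms] assms by blast
  then show ?thesis
    using reflection_self[OF root_nonzero[OF assms]] by simp
qed

lemma root_multiple: "\<alpha> \<in> \<Phi> \<Longrightarrow> c *\<^sub>R \<alpha> \<in> \<Phi> \<Longrightarrow> c = 1 \<or> c = -1"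
  using root_system unfolding root_system_def by blast

lemma root_base_expansion:
  "\<beta> \<in> \<Phi> \<Longrightarrow> \<exists>c::'a \<Rightarrow> int. ((\<forall>\<alpha>\<in>\<Delta>. 0 \<le> c \<alpha>) \<or> (\<forall>\<alpha>\<in>\<Delta>. c \<alpha> \<le> 0)) \<and>
     \<beta> = (\<Sum>\<alpha>\<in>\<Delta>. of_int (c \<alpha>) *\<^sub>R \<alpha>)"
  using base unfolding is_base_def by blast

lemma simple_reflection_involution:
  assumes "s \<in> simple_reflections \<Delta>"
  shows "s \<circ> s = id"
proof -
  obtain \<alpha> where "\<alpha> \<in> \<Phi>" "s = reflection \<alpha>"
    using assms base_subset_roots by (auto simp: simple_reflections_def)
  then show ?thesis
    using reflection_reflection[OF root_nonzero] by (simp add: fun_eq_iff)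
qed

text \<open>Since the coordinates of a root in the base all have the same sign, a root is positive
  iff its height is.\<close>
definition height :: "'a \<Rightarrow> real" where
  "height = (SOME g. linear g \<and> (\<forall>\<alpha>\<in>\<Delta>. g \<alpha> = 1))"

lemma linear_height: "linear height" and height_base: "\<alpha> \<in> \<Delta> \<Longrightarrow> height \<alpha> = 1"
proof -
  have "\<exists>g. linear g \<and> (\<forall>\<alpha>\<in>\<Delta>. g \<alpha> = (1::real))"
    by (rule real_vector.linear_independent_extend[OF independent_base])
  from someI_ex[OF this] show "linear height" "\<alpha> \<in> \<Delta> \<Longrightarrow> height \<alpha> = 1"
    unfolding height_def by blast+
qed

lemma height_uminus: "height (- x) = - height x"
  using linear_height linear_neg by blast

lemma height_expansion: "height (\<Sum>\<alpha>\<in>\<Delta>. of_int (c \<alpha>) *\<^sub>R \<alpha>) = (\<Sum>\<alpha>\<in>\<Delta>. of_int (c \<alpha>))"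
  by (simp add: real_vector.linear_sum[OF linear_height] linear_cmul[OF linear_height] height_base)

lemma height_pos_if_nonneg_expansion:
  assumes "\<beta> \<in> \<Phi>" "\<beta> = (\<Sum>\<alpha>\<in>\<Delta>. of_int (c \<alpha>) *\<^sub>R \<alpha>)" "\<forall>\<alpha>\<in>\<Delta>. 0 \<le> c \<alpha>"
  shows "0 < height \<beta>"
proof -
  have "0 \<le> height \<beta>"
    using assms(2,3) by (simp add: height_expansion sum_nonneg)
  moreover have "height \<beta> \<noteq> 0"
  proof
    assume "height \<beta> = 0"
    then have "\<forall>\<alpha>\<in>\<Delta>. c \<alpha> = 0"
      using assms(2,3) sum_nonneg_eq_0_iff[OF finite_base, of "\<lambda>\<alpha>. real_of_int (c \<alpha>)"]
      by (simp add: height_expansion)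
    with assms(2) root_nonzero[OF assms(1)] show False by simp
  qed
  ultimately show ?thesis by simp
qed

lemma height_root_nonzero:
  assumes "\<beta> \<in> \<Phi>"
  shows "height \<beta> \<noteq> 0"
proof -
  obtain c where c: "(\<forall>\<alpha>\<in>\<Delta>. 0 \<le> c \<alpha>) \<or> (\<forall>\<alpha>\<in>\<Delta>. c \<alpha> \<le> 0)"
    and \<beta>: "\<beta> = (\<Sum>\<alpha>\<in>\<Delta>. of_int (c \<alpha>) *\<^sub>R \<alpha>)"
    using root_base_expansion[OF assms] by blast
  show ?thesis
    using c
  proof
    assume "\<forall>\<alpha>\<in>\<Delta>. 0 \<le> c \<alpha>"
    then show ?thesis
      using height_pos_if_nonneg_expansion[OF assms \<beta>] by simp
  next
    assume "\<forall>\<alpha>\<in>\<Delta>. c \<alpha> \<le> 0"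
    moreover have "- \<beta> = (\<Sum>\<alpha>\<in>\<Delta>. of_int (- c \<alpha>) *\<^sub>R \<alpha>)"
      using \<beta> by (simp add: sum_negf[symmetric])
    ultimately have "0 < height (- \<beta>)"
      using height_pos_if_nonneg_expansion[OF uminus_root[OF assms], of "\<lambda>\<alpha>. - c \<alpha>"] by simp
    then show ?thesis
      by (simp add: height_uminus)
  qed
qed

lemma root_expansion_sign:
  assumes "\<beta> \<in> \<Phi>"
  obtains c where "\<beta> = (\<Sum>\<alpha>\<in>\<Delta>. of_int (c \<alpha>) *\<^sub>R \<alpha>)"
    and "0 < height \<beta> \<Longrightarrow> \<forall>\<alpha>\<in>\<Delta>. 0 \<le> c \<alpha>" and "height \<beta> < 0 \<Longrightarrow> \<forall>\<alpha>\<in>\<Delta>. c \<alpha> \<le> 0"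
proof -
  obtain c where c: "(\<forall>\<alpha>\<in>\<Delta>. 0 \<le> c \<alpha>) \<or> (\<forall>\<alpha>\<in>\<Delta>. c \<alpha> \<le> 0)"
    and \<beta>: "\<beta> = (\<Sum>\<alpha>\<in>\<Delta>. of_int (c \<alpha>) *\<^sub>R \<alpha>)"
    using root_base_expansion[OF assms] by blast
  have nonpos: "height \<beta> \<le> 0" if "\<forall>\<alpha>\<in>\<Delta>. c \<alpha> \<le> 0"
    using that \<beta> by (simp add: height_expansion sum_nonpos)
  have nonneg: "0 \<le> height \<beta>" if "\<forall>\<alpha>\<in>\<Delta>. 0 \<le> c \<alpha>"
    using that \<beta> by (simp add: height_expansion sum_nonneg)
  show ?thesis
  proof (rule that[OF \<beta>])
    show "\<forall>\<alpha>\<in>\<Delta>. 0 \<le> c \<alpha>" if "0 < height \<beta>"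
      using c nonpos that by (meson not_le)
    show "\<forall>\<alpha>\<in>\<Delta>. c \<alpha> \<le> 0" if "height \<beta> < 0"
      using c nonneg that by (meson not_le)
  qed
qed

text \<open>A simple reflection only changes the \<open>\<alpha>\<close>-coordinate, and a positive root other than \<open>\<alpha>\<close>
  has a positive coordinate elsewhere.\<close>
lemma height_reflection_pos:
  assumes \<alpha>: "\<alpha> \<in> \<Delta>" and \<beta>: "\<beta> \<in> \<Phi>" "0 < height \<beta>" "\<beta> \<noteq> \<alpha>"
  shows "0 < height (reflection \<alpha> \<beta>)"
proof (rule ccontr)
  define k where "k = 2 * (\<beta> \<bullet> \<alpha>) / (\<alpha> \<bullet> \<alpha>)"
  let ?\<gamma> = "reflection \<alpha> \<beta>"
  have \<alpha>_root: "\<alpha> \<in> \<Phi>" using \<alpha> base_subset_roots by blast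
  have "?\<gamma> \<in> \<Phi>" using reflection_image_roots[OF \<alpha>_root] \<beta>(1) by blast
  moreover assume "\<not> 0 < height ?\<gamma>"
  ultimately obtain d where d: "?\<gamma> = (\<Sum>\<delta>\<in>\<Delta>. of_int (d \<delta>) *\<^sub>R \<delta>)" "\<forall>\<delta>\<in>\<Delta>. d \<delta> \<le> 0"
    using root_expansion_sign height_root_nonzero by (metis linorder_neqE_linordered_idom)
  obtain c where c: "\<beta> = (\<Sum>\<delta>\<in>\<Delta>. of_int (c \<delta>) *\<^sub>R \<delta>)" "\<forall>\<delta>\<in>\<Delta>. 0 \<le> c \<delta>"
    using root_expansion_sign[OF \<beta>(1)] \<beta>(2) by metis
  have "(\<Sum>\<delta>\<in>\<Delta>. (if \<delta> = \<alpha> then k else 0) *\<^sub>R \<delta>) = (\<Sum>\<delta>\<in>\<Delta>. if \<delta> = \<alpha> then k *\<^sub>R \<delta> else 0)"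
    by (rule sum.cong) auto
  then have k_sum: "(\<Sum>\<delta>\<in>\<Delta>. (if \<delta> = \<alpha> then k else 0) *\<^sub>R \<delta>) = k *\<^sub>R \<alpha>"
    using \<alpha> finite_base by simp
  have "\<beta> = ?\<gamma> + k *\<^sub>R \<alpha>"
    by (simp add: reflection_def k_def)
  also have "\<dots> = (\<Sum>\<delta>\<in>\<Delta>. (of_int (d \<delta>) + (if \<delta> = \<alpha> then k else 0)) *\<^sub>R \<delta>)"
    by (simp only: d(1) k_sum scaleR_add_left sum.distrib)
  finally have "of_int (c \<delta>) = of_int (d \<delta>) + (if \<delta> = \<alpha> then k else 0)" if "\<delta> \<in> \<Delta>" for \<delta>
    using independent_coeff_unique[OF independent_base _ that] c(1) by metis
  then have "c \<delta> = 0" if "\<delta> \<in> \<Delta>" "\<delta> \<noteq> \<alpha>" for \<delta>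
    using that c(2) d(2) by (metis of_int_eq_iff add_0_right order_antisym)
  then have "\<beta> = of_int (c \<alpha>) *\<^sub>R \<alpha>"
    unfolding c(1) using \<alpha> finite_base by (simp add: sum.remove)
  then have "\<beta> = \<alpha> \<or> \<beta> = - \<alpha>"
    using root_multiple[OF \<alpha>_root, of "of_int (c \<alpha>)"] \<beta>(1) by auto
  then show False
    using \<beta> height_base[OF \<alpha>] height_uminus by auto
qed

lemma height_reflection_neg_iff:
  assumes \<alpha>: "\<alpha> \<in> \<Delta>" and \<gamma>: "\<gamma> \<in> \<Phi>" "\<gamma> \<noteq> \<alpha>" "\<gamma> \<noteq> - \<alpha>"
  shows "height (reflection \<alpha> \<gamma>) < 0 \<longleftrightarrow> height \<gamma> < 0"
proof (cases "0 < height \<gamma>")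
  case True
  with height_reflection_pos[OF \<alpha> \<gamma>(1) True \<gamma>(2)] show ?thesis by simp
next
  case False
  then have "0 < height (- \<gamma>)" and "- \<gamma> \<noteq> \<alpha>"
    using height_root_nonzero[OF \<gamma>(1)] \<gamma>(3) by (auto simp: height_uminus)
  then have "0 < height (reflection \<alpha> (- \<gamma>))"
    using height_reflection_pos[OF \<alpha> uminus_root[OF \<gamma>(1)]] by blast
  moreover have "height \<gamma> < 0"
    using False height_root_nonzero[OF \<gamma>(1)] by linarith
  ultimately show ?thesis
    by (simp add: reflection_uminus height_uminus)
qed

definition root_preserving :: "('a \<Rightarrow> 'a) \<Rightarrow> bool" where
  "root_preserving w \<longleftrightarrow> linear w \<and> inj w \<and> w ` \<Phi> = \<Phi>"

definition inversions :: "('a \<Rightarrow> 'a) \<Rightarrow> nat" where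
  "inversions w = card {\<beta>\<in>\<Phi>. 0 < height \<beta> \<and> height (w \<beta>) < 0}"

lemma root_preserving_word_prod:
  "set ws \<subseteq> simple_reflections \<Delta> \<Longrightarrow> root_preserving (word_prod ws)"
proof (induction ws)
  case Nil
  then show ?case by (simp add: root_preserving_def bounded_linear.linear)
next
  case (Cons s ws)
  then obtain \<alpha> where \<alpha>: "\<alpha> \<in> \<Phi>" "s = reflection \<alpha>"
    using base_subset_roots by (auto simp: simple_reflections_def)
  then have "inj s"
    using reflection_reflection[OF root_nonzero] by (metis injI)
  have w: "linear (word_prod ws)" "inj (word_prod ws)" "word_prod ws ` \<Phi> = \<Phi>"
    using Cons by (auto simp: root_preserving_def)
  have "linear (s \<circ> word_prod ws)"
    using linear_compose[OF w(1) linear_reflection] \<alpha>(2) by simp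
  moreover have "inj (s \<circ> word_prod ws)"
    using inj_compose[OF \<open>inj s\<close> w(2)] .
  moreover have "(s \<circ> word_prod ws) ` \<Phi> = \<Phi>"
    unfolding image_comp[symmetric] w(3) \<alpha>(2) by (rule reflection_image_roots[OF \<alpha>(1)])
  ultimately show ?case
    unfolding root_preserving_def word_prod_Cons by blast
qed

text \<open>With \<open>w x = \<alpha>\<close>, the inversion sets of \<open>w\<close> and \<open>s\<^sub>\<alpha> w\<close> differ exactly by the one
  of \<open>x\<close>, \<open>-x\<close> that is positive.\<close>
lemma inversions_simple_reflection:
  assumes w: "root_preserving w" and \<alpha>: "\<alpha> \<in> \<Delta>"
  shows "inversions (reflection \<alpha> \<circ> w) = Suc (inversions w) \<or>
    inversions w = Suc (inversions (reflection \<alpha> \<circ> w))"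
proof -
  let ?s = "reflection \<alpha>"
  have \<alpha>_root: "\<alpha> \<in> \<Phi>" using \<alpha> base_subset_roots by blast
  have lin: "linear w" and "inj w" and w_roots: "w ` \<Phi> = \<Phi>"
    using w unfolding root_preserving_def by auto
  obtain x where x: "x \<in> \<Phi>" "w x = \<alpha>" using \<alpha>_root w_roots by force
  have wnx: "w (- x) = - \<alpha>" using lin linear_neg x(2) by metis
  have s\<alpha>: "?s \<alpha> = - \<alpha>" "?s (- \<alpha>) = \<alpha>"
    using reflection_self[OF root_nonzero[OF \<alpha>_root]] by (simp_all add: reflection_uminus)
  define A where "A = {\<beta>\<in>\<Phi>. 0 < height \<beta> \<and> height (w \<beta>) < 0}"
  define B where "B = {\<beta>\<in>\<Phi>. 0 < height \<beta> \<and> height ((?s \<circ> w) \<beta>) < 0}"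
  have "finite B" unfolding B_def using finite_roots by simp
  have "finite A" unfolding A_def using finite_roots by simp
  have same: "\<beta> \<in> A \<longleftrightarrow> \<beta> \<in> B" if "\<beta> \<noteq> x" "\<beta> \<noteq> - x" for \<beta>
  proof -
    have "w \<beta> \<noteq> \<alpha>" "w \<beta> \<noteq> - \<alpha>"
      using that x(2) wnx \<open>inj w\<close> by (metis injD)+
    then have "\<beta> \<in> \<Phi> \<Longrightarrow> height (?s (w \<beta>)) < 0 \<longleftrightarrow> height (w \<beta>) < 0"
      using height_reflection_neg_iff[OF \<alpha>] w_roots by blast
    then show ?thesis unfolding A_def B_def by auto
  qed
  show ?thesis
  proof (cases "0 < height x")
    case True
    then have "x \<in> B" "x \<notin> A" "- x \<notin> A" "- x \<notin> B"
      using x s\<alpha> height_base[OF \<alpha>] by (auto simp: A_def B_def height_uminus)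
    then have "B = insert x A"
      using same by (intro set_eqI) (smt (verit) insert_iff)
    then show ?thesis using \<open>finite A\<close> \<open>x \<notin> A\<close> by (simp add: inversions_def A_def B_def)
  next
    case False
    then have "0 < height (- x)"
      using height_root_nonzero[OF x(1)] by (simp add: height_uminus)
    then have "- x \<in> A" "- x \<notin> B" "x \<notin> A" "x \<notin> B"
      using x wnx s\<alpha> uminus_root height_base[OF \<alpha>] False
      by (auto simp: A_def B_def height_uminus)
    then have "A = insert (- x) B"
      using same by (intro set_eqI) (smt (verit) insert_iff)
    then show ?thesis using \<open>finite B\<close> \<open>- x \<notin> B\<close> by (simp add: inversions_def A_def B_def)
  qed
qed

lemma even_inversions_word_prod:
  "set ws \<subseteq> simple_reflections \<Delta> \<Longrightarrow> even (inversions (word_prod ws)) \<longleftrightarrow> even (length ws)"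
proof (induction ws)
  case Nil
  have "inversions (word_prod []) = 0"
    unfolding inversions_def by (simp add: card_eq_0_iff)
  then show ?case by (simp del: word_prod_Nil)
next
  case (Cons s ws)
  then obtain \<alpha> where \<alpha>: "\<alpha> \<in> \<Delta>" "s = reflection \<alpha>"
    by (auto simp: simple_reflections_def)
  have "root_preserving (word_prod ws)"
    using Cons.prems root_preserving_word_prod by simp
  from inversions_simple_reflection[OF this \<alpha>(1)] \<alpha>(2)
  have "even (inversions (word_prod (s # ws))) \<longleftrightarrow> odd (inversions (word_prod ws))"
    by auto
  moreover have "even (inversions (word_prod ws)) \<longleftrightarrow> even (length ws)"
    using Cons by simp
  ultimately show ?case
    unfolding length_Cons even_Suc by blast
qed

lemma even_wlen_word_prod:
  assumes "set ws \<subseteq> simple_reflections \<Delta>"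
  shows "even (wlen (simple_reflections \<Delta>) (word_prod ws)) \<longleftrightarrow> even (length ws)"
proof -
  obtain rs where "reduced_word (simple_reflections \<Delta>) (word_prod ws) rs"
    using reduced_word_exists[OF assms] .
  then show ?thesis
    using even_inversions_word_prod assms unfolding reduced_word_def by metis
qed

lemma wlen_simple_reflection_neq:
  assumes "set ws \<subseteq> simple_reflections \<Delta>" "s \<in> simple_reflections \<Delta>"
  shows "wlen (simple_reflections \<Delta>) (s \<circ> word_prod ws) \<noteq> wlen (simple_reflections \<Delta>) (word_prod ws)"
  using even_wlen_word_prod[of ws] even_wlen_word_prod[of "s # ws"] assms by auto

lemma reduced_word_Cons_if_absorbed:
  assumes "reduced_word (simple_reflections \<Delta>) u ws" "c \<in> simple_reflections \<Delta>"
    and "wlen (simple_reflections \<Delta>) (c \<circ> u) \<le> wlen (simple_reflections \<Delta>) u"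
  obtains ys where "reduced_word (simple_reflections \<Delta>) u (c # ys)"
proof -
  let ?S = "simple_reflections \<Delta>"
  have ws: "set ws \<subseteq> ?S" "word_prod ws = u"
    using assms(1) unfolding reduced_word_def by auto
  then have less: "wlen ?S (c \<circ> u) < wlen ?S u"
    using wlen_simple_reflection_neq[OF ws(1) assms(2)] assms(3) by simp
  obtain ys where ys: "reduced_word ?S (c \<circ> u) ys"
    using reduced_word_exists[of "c # ws" ?S] ws assms(2) by auto
  have "word_prod (c # ys) = u"
    using ys simple_reflection_involution[OF assms(2)]
    by (simp add: reduced_word_def comp_assoc[symmetric])
  moreover have "set (c # ys) \<subseteq> ?S"
    using ys assms(2) by (simp add: reduced_word_def)
  ultimately have "wlen ?S u \<le> length (c # ys)"
    using wlen_le_length by metis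
  with less ys \<open>set (c # ys) \<subseteq> ?S\<close> \<open>word_prod (c # ys) = u\<close> show ?thesis
    by (intro that[of ys]) (simp add: reduced_word_def)
qed

lemma hecke_prod_two_reduced_words:
  assumes "set ss \<subseteq> simple_reflections \<Delta>"
    and "wlen (simple_reflections \<Delta>) (hecke_prod (simple_reflections \<Delta>) ss) < length ss"
  obtains p c b xs ys where "ss = p @ c # b"
    "reduced_word (simple_reflections \<Delta>) (hecke_prod (simple_reflections \<Delta>) ss) (xs @ c # ys)"
    "reduced_word (simple_reflections \<Delta>) (hecke_prod (simple_reflections \<Delta>) ss) (xs @ b)"
proof -
  let ?S = "simple_reflections \<Delta>"
  have "\<not> reduced_word ?S (hecke_prod ?S ss) ss"
    using assms(2) by (simp add: reduced_word_def)
  then obtain p c b where ss: "ss = p @ c # b" and b: "reduced_word ?S (hecke_prod ?S b) b"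
    and absorbed: "wlen ?S (c \<circ> hecke_prod ?S b) \<le> wlen ?S (hecke_prod ?S b)"
    using hecke_prod_reduced_or_absorbs[OF assms(1)] by blast
  have "set p \<subseteq> ?S" "c \<in> ?S" "set b \<subseteq> ?S" using assms(1) ss by auto
  then obtain xs where xs: "set xs \<subseteq> ?S"
    "hecke_prod ?S (p @ c # b) = word_prod xs \<circ> hecke_prod ?S (c # b)"
    "wlen ?S (hecke_prod ?S (p @ c # b)) = length xs + wlen ?S (hecke_prod ?S (c # b))"
    using hecke_prod_append[of p ?S "c # b"] by auto
  have cb: "hecke_prod ?S (c # b) = hecke_prod ?S b"
    using absorbed by simp
  obtain ys where "reduced_word ?S (hecke_prod ?S b) (c # ys)"
    using reduced_word_Cons_if_absorbed[OF b \<open>c \<in> ?S\<close> absorbed] .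
  with b xs cb ss show ?thesis
    using reduced_word_append[of ?S _ _ xs] by (intro that) auto
qed

end

theorem proposition3p4:
  fixes \<Phi> \<Delta> :: "'a::euclidean_space set" and ss :: "('a \<Rightarrow> 'a) list" and w :: "'a \<Rightarrow> 'a"
  assumes "root_system \<Phi>" and "is_base \<Phi> \<Delta>"
    and "set ss \<subseteq> simple_reflections \<Delta>"
    and "w \<in> weyl_group \<Phi>"
    and "hecke_prod (simple_reflections \<Delta>) ss = w"
    and "fully_commutative (simple_reflections \<Delta>) w"
    and "length ss > wlen (simple_reflections \<Delta>) w"
  shows "\<exists>i j. i < j \<and> j < length ss \<and> ss ! i = ss ! j \<and>
           (\<forall>k. i < k \<and> k < j \<longrightarrow> ss ! i \<circ> ss ! k = ss ! k \<circ> ss ! i)"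
proof -
  obtain p c b xs ys where ss: "ss = p @ c # b"
    and "reduced_word (simple_reflections \<Delta>) w (xs @ c # ys)"
    and "reduced_word (simple_reflections \<Delta>) w (xs @ b)"
    using hecke_prod_two_reduced_words[OF assms(1-3)] assms(5,7) by blast
  with assms(6) have "(xs @ c # ys, xs @ b) \<in> comm_move\<^sup>*"
    unfolding fully_commutative_def by blast
  then obtain j where j: "j < length b" "b ! j = c" "\<forall>k<j. c \<circ> b ! k = b ! k \<circ> c"
    by (rule comm_move_rtrancl_first_occurrence)
  have "ss ! k = b ! (k - Suc (length p))" if "length p < k" for k
    using that ss by (simp add: nth_append)
  with j ss show ?thesis
    by (intro exI[of _ "length p"] exI[of _ "length p + Suc j"])
      (auto simp: nth_append less_diff_conv2)
qed

end
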